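(* For integers $e_1,\dots,e_l\ge1$ the coefficients of the series \[ T\begin{pmatrix}X_1,\dots,X_l\\ Y_1,\dots,Y_l\\ e_1,\dots,e_l\end{pmatrix}:=\sum_{u_1>\dots>u_l>0}\prod_{j=1}^{l}E_{u_j}(Y_j)\,L_{u_j}(X_j)^{e_j} \] (as a power series in $X_1,\dots,X_l,Y_1,\dots,Y_l$) lie in $\mathcal{BD}$, and \[ \mathcal{D}^Y_{e_1,\dots,e_l}\,T\binom{X_1,\dots,X_l}{Y_1,\dots,Y_l}=T\begin{pmatrix}Y_1+\dots+Y_l,\ \dots,\ Y_1+Y_2,\ Y_1\\ X_l,\ X_{l-1}-X_l,\ \dots,\ X_1-X_2\\ e_1,\ \dots,\ e_l\end{pmatrix}. \]
   Context: $E_n(X)=e^{nX}$, $L_n(X)=\frac{e^Xq^n}{1-e^Xq^n}$. Bi-brackets: for integers $s_j\ge1$, $r_j\ge0$, \[ \left[\begin{matrix}s_1,\dots,s_l\\ r_1,\dots,r_l\end{matrix}\right]:=\sum_{\substack{u_1>\dots>u_l>0\\ v_1,\dots,v_l>0}}\prod_{j=1}^{l}\frac{u_j^{r_j}}{r_j!}\,\frac{v_j^{s_j-1}}{(s_j-1)!}\;q^{u_1v_1+\dots+u_lv_l}\in\mathbb{Q}[[q]], \] $\mathcal{BD}$ is the $\mathbb{Q}$-span of $1$ and all bi-brackets, and $T\binom{X_1,\dots,X_l}{Y_1,\dots,Y_l}:=\sum_{s_j,r_j>0}\left[\begin{matrix}s_1,\dots,s_l\\ r_1-1,\dots,r_l-1\end{matrix}\right]\prod_j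 X_j^{s_j-1}Y_j^{r_j-1}$ (this equals the series with all $e_j=1$). The differential operator is $\mathcal{D}^Y_{e_1,\dots,e_l}:=D_{Y_1,e_1}D_{Y_2,e_2}\cdots D_{Y_l,e_l}$ with \[ D_{Y_j,e}:=\prod_{k=1}^{e-1}\Big(\frac1k\Big(\frac{\partial}{\partial Y_{l-j+1}}-\frac{\partial}{\partial Y_{l-j+2}}\Big)-1\Big),\qquad \frac{\partial}{\partial Y_{l+1}}:=0 \] (an empty product is the identity). *)

theory Defs
  imports "HOL-Computational_Algebra.Formal_Power_Series" "HOL-Library.Poly_Mapping"
begin

text \<open>q-series live in \<open>rat fps\<close> (the variable is q).  A formal power series in the
  2l variables X_1..X_l, Y_1..Y_l with coefficients in Q[[q]] is represented by its
  coefficient function: \<open>c a b\<close> is the coefficient of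
  X_1^(a!0)...X_l^(a!(l-1)) Y_1^(b!0)...Y_l^(b!(l-1)) (lists a, b of length l).\<close>

type_synonym mser = "nat list \<Rightarrow> nat list \<Rightarrow> rat fps"

definition bibr :: "nat list \<Rightarrow> nat list \<Rightarrow> rat fps" where
  "bibr s r = Abs_fps (\<lambda>N.
     \<Sum>(u,v)\<in>{(u,v). length u = length s \<and> length v = length s \<and> sorted_wrt (>) u
                 \<and> (\<forall>x\<in>set u. 0 < x) \<and> (\<forall>x\<in>set v. 0 < x)
                 \<and> (\<Sum>j<length s. u!j * v!j) = N}.
       \<Prod>j<length s. (of_nat (u!j) ^ (r!j) / fact (r!j))
                    * (of_nat (v!j) ^ (s!j - 1) / fact (s!j - 1)))"

inductive_set BD :: "rat fps set" where
  BD_one: "1 \<in> BD"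
| BD_bibr: "length s = length r \<Longrightarrow> (\<forall>x\<in>set s. 1 \<le> x) \<Longrightarrow> bibr s r \<in> BD"
| BD_add: "x \<in> BD \<Longrightarrow> y \<in> BD \<Longrightarrow> x + y \<in> BD"
| BD_smult: "x \<in> BD \<Longrightarrow> fps_const (c::rat) * x \<in> BD"

text \<open>Generating series T(X;Y) of bi-brackets: coefficient of X^a Y^b is [a+1; b].\<close>
definition Tbi :: mser where
  "Tbi a b = bibr (map Suc a) b"

text \<open>E_u(X) = e^{uX} and L_u(X) = e^X q^u / (1 - e^X q^u) as power series in one
  variable X with coefficients in Q[[q]].\<close>
definition Eser :: "nat \<Rightarrow> rat fps fps" where
  "Eser u = Abs_fps (\<lambda>n. fps_const (of_nat u ^ n / fact n))"

definition Lser :: "nat \<Rightarrow> rat fps fps" where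
  "Lser u = (let w = fps_const (fps_X ^ u) * Eser 1 in w * inverse (1 - w))"

text \<open>Terms with u_1 > N do not
  contribute to the coefficient of q^N (L_u(X)^e has q-order \<ge> u e), so this finite
  sum computes the q-adically convergent infinite sum coefficientwise.\<close>
definition decr :: "nat \<Rightarrow> nat \<Rightarrow> nat list set" where
  "decr l N = {u. length u = l \<and> sorted_wrt (>) u \<and> (\<forall>x\<in>set u. 0 < x \<and> x \<le> N)}"

definition Tgen :: "nat list \<Rightarrow> mser" where
  "Tgen es a b = Abs_fps (\<lambda>N.
     fps_nth (\<Sum>u\<in>decr (length es) N.
        \<Prod>j<length es. fps_nth (Eser (u!j)) (b!j) * fps_nth (Lser (u!j) ^ (es!j)) (a!j)) N)"

text \<open>Partial derivative with respect to the variable Y_{k+1} (0-based index k);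
  the derivative with respect to Y_{l+1} (index l) is 0.\<close>
definition dY :: "nat \<Rightarrow> nat \<Rightarrow> mser \<Rightarrow> mser" where
  "dY l k c = (\<lambda>a b. if k < l then of_nat (b!k + 1) * c a (b[k := b!k + 1]) else 0)"

text \<open>(1/k)(d/dY_{l-j+1} - d/dY_{l-j+2}) - 1\<close>
definition Dstep :: "nat \<Rightarrow> nat \<Rightarrow> nat \<Rightarrow> mser \<Rightarrow> mser" where
  "Dstep l j k c = (\<lambda>a b. fps_const (1 / of_nat k) * (dY l (l - j) c a b - dY l (l - j + 1) c a b) - c a b)"

text \<open>D_{Y_j,e} = prod_{k=1}^{e-1} Dstep (commuting factors)\<close>
definition DYj :: "nat \<Rightarrow> nat \<Rightarrow> nat \<Rightarrow> mser \<Rightarrow> mser" where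
  "DYj l j e c = fold (Dstep l j) [1..<e] c"

definition DY :: "nat list \<Rightarrow> mser \<Rightarrow> mser" where
  "DY es c = foldr (\<lambda>j. DYj (length es) j (es!(j - 1))) [1..<Suc (length es)] c"

text \<open>Polynomials over Q in variables indexed by nat: variable i < l is X_{i+1},
  variable l + i is Y_{i+1}.\<close>
type_synonym rpoly = "(nat \<Rightarrow>\<^sub>0 nat) \<Rightarrow>\<^sub>0 rat"

definition pvar :: "nat \<Rightarrow> rpoly" where
  "pvar k = Poly_Mapping.single (Poly_Mapping.single k 1) 1"

definition pmono :: "nat \<Rightarrow> nat list \<Rightarrow> nat list \<Rightarrow> (nat \<Rightarrow>\<^sub>0 nat)" where
  "pmono l a b = (\<Sum>j<l. Poly_Mapping.single j (a!j) + Poly_Mapping.single (l + j) (b!j))"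

text \<open>New upper variables: X'_{j+1} = Y_1 + ... + Y_{l-j}.\<close>
definition Xsub :: "nat \<Rightarrow> nat \<Rightarrow> rpoly" where
  "Xsub l j = (\<Sum>i<l - j. pvar (l + i))"

text \<open>New lower variables: Y'_1 = X_l, Y'_{j+1} = X_{l-j} - X_{l-j+1} (j \<ge> 1).\<close>
definition Ysub :: "nat \<Rightarrow> nat \<Rightarrow> rpoly" where
  "Ysub l j = (if j = 0 then pvar (l - 1) else pvar (l - j - 1) - pvar (l - j))"

text \<open>Coefficient of X^a Y^b in T(X'; Y'; e).  The substitution is homogeneous linear,
  so only terms of the same total degree contribute.\<close>
definition Tsubst :: "nat list \<Rightarrow> mser" where
  "Tsubst es a b = (let l = length es in
     \<Sum>(a',b')\<in>{(a',b'). length a' = l \<and> length b' = l \<and> sum_list a' + sum_list b' = sum_list a + sum_list b}.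
        fps_const (Poly_Mapping.lookup (\<Prod>j<l. Xsub l j ^ (a'!j) * Ysub l j ^ (b'!j)) (pmono l a b)) * Tgen es a' b')"

end

theory Submission
  imports Defs "HOL-Computational_Algebra.Polynomial"
begin

text \<open>All series in the theorem are exponential sums
  \<open>\<Sum>(u,v). g(u,v) \<Prod>j. e^(v_j X_j + u_j Y_j) q^(u_j v_j)\<close> over the index pairs of the
  bi-brackets, so it suffices to compare weights \<open>g\<close>. Since
  \<open>L_u(X)^e = \<Sum>v. binom(v-1, e-1) e^(vX) q^(uv)\<close>, the series \<open>T(X;Y;e)\<close> has weight
  \<open>\<Prod>j. binom(v_j - 1, e_j - 1)\<close>; this is a polynomial in \<open>v\<close>, and multiplying by \<open>v^t\<close> only
  shifts \<open>X\<close>-degrees, so its coefficients are combinations of bi-brackets.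
  The series \<open>T(X;Y)\<close> has weight 1, and \<open>D_(Y_j,e)\<close> acts on it diagonally by
  \<open>\<Prod>k<e. (\<delta>/k - 1) = binom(\<delta>-1, e-1)\<close> with \<open>\<delta> = u_(l-j+1) - u_(l-j+2)\<close>. On the other side,
  the substitution turns \<open>\<Sum>j. v_j X'_j + u_j Y'_j\<close> into \<open>\<Sum>i. \<delta>_i X_i + (v_1 + \<dots> + v_(l-i+1)) Y_i\<close>,
  and \<open>(u, v) \<mapsto> (partial sums of v, differences of u)\<close> is an involution of the index pairs
  preserving \<open>\<Sum>j. u_j v_j\<close>; hence both sides have the same weight.\<close>

section \<open>Powers of L as exponential sums\<close>

text \<open>\<open>Lpow_weight e v = binom(v-1, e-1)\<close> is the coefficient of \<open>e^(vX) q^(uv)\<close> in \<open>L_u(X)^e\<close>.\<close>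

definition Lpow_weight :: "nat \<Rightarrow> nat \<Rightarrow> rat" where
  "Lpow_weight e v =
     (if e = 0 then (if v = 0 then 1 else 0) else if v = 0 then 0 else of_nat ((v - 1) choose (e - 1)))"

lemma Lpow_weight_Suc_0 [simp]: "Lpow_weight (Suc e) 0 = 0"
  by (simp add: Lpow_weight_def)

lemma Lpow_weight_Suc_Suc: "Lpow_weight (Suc e) (Suc v) = Lpow_weight e v + Lpow_weight (Suc e) v"
  by (cases e; cases v) (auto simp: Lpow_weight_def)

definition Lser_num :: "nat \<Rightarrow> rat fps fps" where
  "Lser_num u = fps_const (fps_X ^ u) * Eser 1"

definition Lpow_expansion :: "nat \<Rightarrow> nat \<Rightarrow> rat fps fps" where
  "Lpow_expansion u e = Abs_fps (\<lambda>a. Abs_fps (\<lambda>M.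
     if u dvd M then Lpow_weight e (M div u) * of_nat (M div u) ^ a / fact a else 0))"

lemma sum_power_div_fact_binomial:
  "(\<Sum>i=0..a. (x::rat) ^ i / fact i * (1 / fact (a - i))) = (x + 1) ^ a / fact a"
proof -
  have "(x + 1) ^ a = (\<Sum>i\<le>a. of_nat (a choose i) * x ^ i * 1 ^ (a - i))"
    by (rule binomial_ring)
  also have "\<dots> = (\<Sum>i\<le>a. fact a * (x ^ i / fact i * (1 / fact (a - i))))"
    by (rule sum.cong) (auto simp: binomial_fact field_simps)
  also have "\<dots> = fact a * (\<Sum>i=0..a. x ^ i / fact i * (1 / fact (a - i)))"
    by (simp add: sum_distrib_left atLeast0AtMost)
  finally show ?thesis by simp
qed

lemma nth_nth_mult_Lser_num:
  "fps_nth (fps_nth (F * Lser_num u) a) M =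
     (if M < u then 0 else (\<Sum>i=0..a. fps_nth (fps_nth F i) (M - u) * (1 / fact (a - i))))"
proof -
  have "F * Lser_num u = fps_const (fps_X ^ u) * (F * Eser 1)"
    by (simp add: Lser_num_def algebra_simps)
  then have "fps_nth (F * Lser_num u) a = fps_X ^ u * fps_nth (F * Eser 1) a"
    by (simp only: fps_mult_left_const_nth)
  moreover have "fps_nth (F * Eser 1) a = (\<Sum>i=0..a. fps_nth F i * fps_const (1 / fact (a - i)))"
    by (simp add: fps_mult_nth Eser_def)
  ultimately show ?thesis
    by (simp add: fps_X_power_mult_nth fps_sum_nth)
qed

text \<open>The recursion \<open>L^(e+1) = L^e W + L^(e+1) W\<close>, i.e. \<open>L^(e+1) (1 - W) = L^e W\<close>,
  is Pascal's rule for the weights.\<close>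

lemma Lpow_expansion_Suc:
  assumes u: "1 \<le> u"
  shows "Lpow_expansion u (Suc e) = Lpow_expansion u e * Lser_num u + Lpow_expansion u (Suc e) * Lser_num u"
proof (rule fps_ext, rule fps_ext)
  fix a M
  show "fps_nth (fps_nth (Lpow_expansion u (Suc e)) a) M =
    fps_nth (fps_nth (Lpow_expansion u e * Lser_num u + Lpow_expansion u (Suc e) * Lser_num u) a) M"
  proof (cases "M < u")
    case True
    then have "u dvd M \<Longrightarrow> M = 0" using dvd_imp_le by (cases M) auto
    with True show ?thesis using u by (auto simp: nth_nth_mult_Lser_num Lpow_expansion_def)
  next
    case False
    then obtain M' where M: "M = M' + u" by (metis add.commute le_add_diff_inverse not_le)
    have dvd_iff: "u dvd M \<longleftrightarrow> u dvd M'" using M by auto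
    show ?thesis
    proof (cases "u dvd M'")
      case False
      then show ?thesis using dvd_iff M u by (simp add: nth_nth_mult_Lser_num Lpow_expansion_def)
    next
      case True
      then obtain v where v: "M' = u * v" by auto
      have M_div: "M div u = Suc v" "M' div u = v" using u M v by auto
      define S where "S = (\<Sum>i=0..a. of_nat v ^ i / fact i * (1 / fact (a - i)) :: rat)"
      have "fps_nth (fps_nth (Lpow_expansion u e * Lser_num u + Lpow_expansion u (Suc e) * Lser_num u) a) M
          = Lpow_weight e v * S + Lpow_weight (Suc e) v * S"
        using u M v M_div True
        by (simp add: nth_nth_mult_Lser_num Lpow_expansion_def S_def sum_distrib_left mult.assoc)
      also have "\<dots> = (Lpow_weight e v + Lpow_weight (Suc e) v) * ((of_nat v + 1) ^ a / fact a)"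
        unfolding S_def sum_power_div_fact_binomial by (simp add: algebra_simps add_divide_distrib)
      also have "\<dots> = fps_nth (fps_nth (Lpow_expansion u (Suc e)) a) M"
        using dvd_iff True M_div by (simp add: Lpow_expansion_def Lpow_weight_Suc_Suc add.commute)
      finally show ?thesis by simp
    qed
  qed
qed

lemma one_minus_Lser_num_mult_inverse:
  assumes u: "1 \<le> u"
  shows "(1 - Lser_num u) * inverse (1 - Lser_num u) = 1"
proof -
  let ?F = "1 - Lser_num u"
  have "fps_nth ?F 0 = 1 - fps_X ^ u" by (simp add: Lser_num_def Eser_def)
  then have "fps_nth (fps_nth ?F 0) 0 \<noteq> 0" using u by (simp add: fps_X_power_nth)
  then have "fps_nth ?F 0 * inverse (fps_nth ?F 0) = 1" by (rule inverse_mult_eq_1')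
  then have "?F * fps_right_inverse ?F (inverse (fps_nth ?F 0)) = 1" by (rule fps_right_inverse)
  then show ?thesis by (simp add: fps_inverse_def)
qed

lemma Lpow_expansion_0: "1 \<le> u \<Longrightarrow> Lpow_expansion u 0 = 1"
proof (rule fps_ext, rule fps_ext)
  fix a M assume u: "1 \<le> u"
  have "u dvd M \<Longrightarrow> M div u = 0 \<longleftrightarrow> M = 0" using u by auto
  then show "fps_nth (fps_nth (Lpow_expansion u 0) a) M = fps_nth (fps_nth (1::rat fps fps) a) M"
    using u by (cases "a = 0") (auto simp: Lpow_expansion_def Lpow_weight_def)
qed

lemma Lser_power:
  assumes u: "1 \<le> u"
  shows "Lser u ^ e = Lpow_expansion u e"
proof (induction e)
  case 0
  show ?case using Lpow_expansion_0[OF u] by simp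
next
  case (Suc e)
  let ?P = "Lpow_expansion u" and ?W = "Lser_num u"
  have rec: "?P (Suc e) * (1 - ?W) = ?P e * ?W"
    using Lpow_expansion_Suc[OF u, of e] by (simp add: algebra_simps)
  have "?P (Suc e) = ?P (Suc e) * ((1 - ?W) * inverse (1 - ?W))"
    using one_minus_Lser_num_mult_inverse[OF u] by simp
  also have "\<dots> = ?P e * (?W * inverse (1 - ?W))"
    by (simp only: mult.assoc [symmetric] rec)
  also have "\<dots> = ?P e * Lser u"
    by (simp add: Lser_def Lser_num_def Let_def)
  finally show ?case using Suc by (simp add: mult.commute)
qed

section \<open>Exponential sums over bi-bracket index pairs\<close>

definition weak_compositions :: "nat \<Rightarrow> nat \<Rightarrow> nat list set" where
  "weak_compositions m D = {z. length z = m \<and> sum_list z = D}"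

definition bibr_pairs :: "nat \<Rightarrow> nat \<Rightarrow> (nat list \<times> nat list) set" where
  "bibr_pairs l N = {(u,v). length u = l \<and> length v = l \<and> sorted_wrt (>) u
                 \<and> (\<forall>x\<in>set u. 0 < x) \<and> (\<forall>x\<in>set v. 0 < x)
                 \<and> (\<Sum>j<l. u!j * v!j) = N}"

definition exp_monomial :: "nat \<Rightarrow> nat list \<Rightarrow> nat list \<Rightarrow> nat list \<Rightarrow> nat list \<Rightarrow> rat" where
  "exp_monomial l a b u v =
     (\<Prod>j<l. (of_nat (u!j) ^ (b!j) / fact (b!j)) * (of_nat (v!j) ^ (a!j) / fact (a!j)))"

definition exp_series :: "nat \<Rightarrow> (nat list \<Rightarrow> nat list \<Rightarrow> rat) \<Rightarrow> mser" where
  "exp_series l g a b = Abs_fps (\<lambda>N. \<Sum>(u,v)\<in>bibr_pairs l N. g u v * exp_monomial l a b u v)"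

lemma finite_weak_compositions: "finite (weak_compositions m D)"
proof -
  have "weak_compositions m D \<subseteq> {z. set z \<subseteq> {..D} \<and> length z = m}"
    by (auto simp: weak_compositions_def intro: member_le_sum_list)
  then show ?thesis by (rule finite_subset) (simp add: finite_lists_length_eq)
qed

lemma weak_compositions_0: "weak_compositions 0 D = (if D = 0 then {[]} else {})"
  by (auto simp: weak_compositions_def)

lemma weak_compositions_Suc:
  "weak_compositions (Suc m) D = (\<lambda>(i,z). i # z) ` (SIGMA i:{0..D}. weak_compositions m (D - i))"
proof
  show "weak_compositions (Suc m) D \<subseteq> (\<lambda>(i,z). i # z) ` (SIGMA i:{0..D}. weak_compositions m (D - i))"
  proof
    fix w assume w: "w \<in> weak_compositions (Suc m) D"
    then obtain i z where "w = i # z" by (cases w) (auto simp: weak_compositions_def)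
    with w show "w \<in> (\<lambda>(i,z). i # z) ` (SIGMA i:{0..D}. weak_compositions m (D - i))"
      by (auto simp: weak_compositions_def image_iff)
  qed
qed (auto simp: weak_compositions_def)

lemma sum_weak_compositions_Suc:
  "(\<Sum>w\<in>weak_compositions (Suc m) D. \<Prod>i<Suc m. f i (w!i)) =
   (\<Sum>k=0..D. f 0 k * (\<Sum>z\<in>weak_compositions m (D - k). \<Prod>i<m. f (Suc i) (z!i)))"
  for f :: "nat \<Rightarrow> nat \<Rightarrow> 'a::comm_semiring_1"
proof -
  have "(\<Sum>w\<in>weak_compositions (Suc m) D. \<Prod>i<Suc m. f i (w!i)) =
      (\<Sum>(k,z)\<in>(SIGMA k:{0..D}. weak_compositions m (D - k)). f 0 k * (\<Prod>i<m. f (Suc i) (z!i)))"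
    unfolding weak_compositions_Suc
    by (subst sum.reindex) (auto simp: inj_on_def prod.lessThan_Suc_shift simp del: prod.lessThan_Suc intro!: sum.cong)
  also have "\<dots> = (\<Sum>k=0..D. f 0 k * (\<Sum>z\<in>weak_compositions m (D - k). \<Prod>i<m. f (Suc i) (z!i)))"
    by (subst sum.Sigma[symmetric]) (auto simp: finite_weak_compositions sum_distrib_left)
  finally show ?thesis .
qed

lemma fps_nth_prod:
  fixes f :: "nat \<Rightarrow> 'a::comm_ring_1 fps"
  shows "fps_nth (\<Prod>j<m. f j) N = (\<Sum>z\<in>weak_compositions m N. \<Prod>j<m. fps_nth (f j) (z!j))"
proof (induction m arbitrary: f N)
  case 0
  show ?case by (simp add: weak_compositions_0)
next
  case (Suc m)
  have "fps_nth (\<Prod>j<Suc m. f j) N = fps_nth (f 0 * (\<Prod>j<m. f (Suc j))) N"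
    by (simp only: prod.lessThan_Suc_shift)
  also have "\<dots> = (\<Sum>i=0..N. fps_nth (f 0) i *
      (\<Sum>z\<in>weak_compositions m (N - i). \<Prod>j<m. fps_nth (f (Suc j)) (z!j)))"
    by (simp add: fps_mult_nth Suc.IH)
  also have "\<dots> = (\<Sum>w\<in>weak_compositions (Suc m) N. \<Prod>j<Suc m. fps_nth (f j) (w!j))"
    by (rule sum_weak_compositions_Suc [symmetric])
  finally show ?case .
qed

lemma bibr_pairs_le:
  assumes "(u,v) \<in> bibr_pairs l N" "j < l"
  shows "u!j \<le> N" "v!j \<le> N"
proof -
  have pos: "0 < u!j" "0 < v!j" using assms by (auto simp: bibr_pairs_def)
  have "u!j * v!j \<le> (\<Sum>j<l. u!j * v!j)"
    by (rule member_le_sum) (use assms in auto)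
  then have le: "u!j * v!j \<le> N" using assms by (simp add: bibr_pairs_def)
  have "u!j \<le> u!j * v!j" "v!j \<le> u!j * v!j" using pos by simp_all
  then show "u!j \<le> N" "v!j \<le> N" using le by linarith+
qed

lemma finite_decr: "finite (decr l N)"
proof -
  have "decr l N \<subseteq> {z. set z \<subseteq> {..N} \<and> length z = l}" by (auto simp: decr_def)
  then show ?thesis by (rule finite_subset) (simp add: finite_lists_length_eq)
qed

lemma fps_nth_Eser_mult_Lser_power:
  assumes "1 \<le> x"
  shows "fps_nth (fps_nth (Eser x) b * fps_nth (Lser x ^ e) a) m
     = of_nat x ^ b / fact b *
       (if x dvd m then Lpow_weight e (m div x) * of_nat (m div x) ^ a / fact a else 0)"
  using assms by (simp add: Lser_power Eser_def Lpow_expansion_def)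

lemma sum_divisor_compositions:
  "(\<Sum>(u,m)\<in>{(u,m). u \<in> decr l N \<and> m \<in> weak_compositions l N \<and> (\<forall>j<l. u!j dvd m!j \<and> 0 < m!j)}. h u m)
   = (\<Sum>(u,v)\<in>bibr_pairs l N. h u (map (\<lambda>j. u!j * v!j) [0..<l]))"
proof (rule sum.reindex_bij_witness [where j = "\<lambda>(u,m). (u, map (\<lambda>j. m!j div u!j) [0..<l])"
      and i = "\<lambda>(u,v). (u, map (\<lambda>j. u!j * v!j) [0..<l])"])
  fix p assume "p \<in> {(u,m). u \<in> decr l N \<and> m \<in> weak_compositions l N \<and> (\<forall>j<l. u!j dvd m!j \<and> 0 < m!j)}"
  then obtain u m where p: "p = (u,m)" and u: "u \<in> decr l N" and m: "m \<in> weak_compositions l N"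
    and dvd: "\<And>j. j < l \<Longrightarrow> u!j dvd m!j \<and> 0 < m!j" by auto
  have len: "length u = l" "length m = l"
    using u m by (auto simp: decr_def weak_compositions_def)
  have upos: "\<And>j. j < l \<Longrightarrow> 0 < u!j" using u len by (auto simp: decr_def all_set_conv_all_nth)
  have vpos: "\<And>j. j < l \<Longrightarrow> 0 < m!j div u!j"
    using dvd upos by (metis dvd_div_eq_0_iff neq0_conv)
  have "(\<Sum>j<l. u!j * (m!j div u!j)) = (\<Sum>j<l. m!j)"
    by (rule sum.cong) (auto simp: dvd)
  also have "\<dots> = N" using m len by (simp add: weak_compositions_def sum_list_sum_nth atLeast0LessThan)
  finally have "(\<Sum>j<l. u!j * (m!j div u!j)) = N" .
  then show "(case p of (u,m) \<Rightarrow> (u, map (\<lambda>j. m!j div u!j) [0..<l])) \<in> bibr_pairs l N"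
    using p u len vpos by (auto simp: bibr_pairs_def decr_def all_set_conv_all_nth)
  have "map (\<lambda>j. u!j * map (\<lambda>j. m!j div u!j) [0..<l] ! j) [0..<l] = m"
    using len dvd by (auto intro!: nth_equalityI)
  then show "(case (case p of (u,m) \<Rightarrow> (u, map (\<lambda>j. m!j div u!j) [0..<l])) of
      (u,v) \<Rightarrow> (u, map (\<lambda>j. u!j * v!j) [0..<l])) = p"
    and "(case (case p of (u,m) \<Rightarrow> (u, map (\<lambda>j. m!j div u!j) [0..<l])) of
      (u,v) \<Rightarrow> h u (map (\<lambda>j. u!j * v!j) [0..<l])) = (case p of (u,m) \<Rightarrow> h u m)"
    using p by simp_all
next
  fix p assume p: "p \<in> bibr_pairs l N"
  obtain u v where uv: "p = (u,v)" by (cases p)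
  have len: "length u = l" "length v = l" using p uv by (auto simp: bibr_pairs_def)
  have pos: "\<And>j. j < l \<Longrightarrow> 0 < u!j" "\<And>j. j < l \<Longrightarrow> 0 < v!j"
    using p uv len by (auto simp: bibr_pairs_def all_set_conv_all_nth)
  show "(case (case p of (u,v) \<Rightarrow> (u, map (\<lambda>j. u!j * v!j) [0..<l])) of
      (u,m) \<Rightarrow> (u, map (\<lambda>j. m!j div u!j) [0..<l])) = p"
    using uv len pos by (auto intro!: nth_equalityI)
  have "\<And>j. j < l \<Longrightarrow> u!j \<le> N" using bibr_pairs_le p uv by blast
  moreover have "(\<Sum>j<l. u!j * v!j) = N" using p uv by (simp add: bibr_pairs_def)
  moreover have "sum_list (map f [0..<l]) = (\<Sum>j<l. f j)" for f :: "nat \<Rightarrow> nat"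
    by (simp add: sum_list_sum_nth atLeast0LessThan)
  ultimately show "(case p of (u,v) \<Rightarrow> (u, map (\<lambda>j. u!j * v!j) [0..<l]))
      \<in> {(u,m). u \<in> decr l N \<and> m \<in> weak_compositions l N \<and> (\<forall>j<l. u!j dvd m!j \<and> 0 < m!j)}"
    using uv len p pos
    by (auto simp: bibr_pairs_def decr_def weak_compositions_def all_set_conv_all_nth)
qed

lemma fps_nth_Tgen:
  "fps_nth (Tgen es a b) N = (\<Sum>u\<in>decr (length es) N. \<Sum>m\<in>weak_compositions (length es) N.
     \<Prod>j<length es. of_nat (u!j) ^ (b!j) / fact (b!j) *
       (if u!j dvd m!j then Lpow_weight (es!j) (m!j div u!j) * of_nat (m!j div u!j) ^ (a!j) / fact (a!j)
        else 0))"
proof -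
  have summand: "fps_nth (\<Prod>j<length es. fps_nth (Eser (u!j)) (b!j) * fps_nth (Lser (u!j) ^ (es!j)) (a!j)) N
      = (\<Sum>m\<in>weak_compositions (length es) N. \<Prod>j<length es. of_nat (u!j) ^ (b!j) / fact (b!j) *
          (if u!j dvd m!j then Lpow_weight (es!j) (m!j div u!j) * of_nat (m!j div u!j) ^ (a!j) / fact (a!j)
           else 0))"
    if u: "u \<in> decr (length es) N" for u
  proof -
    have "\<And>j. j < length es \<Longrightarrow> 1 \<le> u!j"
      using u by (auto simp: decr_def all_set_conv_all_nth Suc_le_eq)
    then show ?thesis
      unfolding fps_nth_prod by (intro sum.cong refl prod.cong fps_nth_Eser_mult_Lser_power) auto
  qed
  show ?thesis
    unfolding Tgen_def fps_nth_Abs_fps fps_sum_nth by (rule sum.cong [OF refl]) (rule summand)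
qed

lemma Tgen_exp_series:
  assumes es: "\<forall>e\<in>set es. 1 \<le> e"
  shows "Tgen es a b = exp_series (length es) (\<lambda>u v. \<Prod>j<length es. Lpow_weight (es!j) (v!j)) a b"
proof (rule fps_ext)
  fix N
  define l where "l = length es"
  define H where "H u m = (\<Prod>j<l. of_nat (u!j) ^ (b!j) / fact (b!j) *
     (if u!j dvd m!j then Lpow_weight (es!j) (m!j div u!j) * of_nat (m!j div u!j) ^ (a!j) / fact (a!j)
      else 0))" for u m :: "nat list"
  define S where "S = {(u,m). u \<in> decr l N \<and> m \<in> weak_compositions l N \<and> (\<forall>j<l. u!j dvd m!j \<and> 0 < m!j)}"
  have "fps_nth (Tgen es a b) N = (\<Sum>u\<in>decr l N. \<Sum>m\<in>weak_compositions l N. H u m)"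
    unfolding H_def l_def by (rule fps_nth_Tgen)
  also have "\<dots> = (\<Sum>(u,m)\<in>decr l N \<times> weak_compositions l N. H u m)"
    by (rule sum.cartesian_product)
  also have "\<dots> = (\<Sum>(u,m)\<in>S. H u m)"
  proof (rule sum.mono_neutral_right)
    show "finite (decr l N \<times> weak_compositions l N)"
      by (simp add: finite_decr finite_weak_compositions)
    show "S \<subseteq> decr l N \<times> weak_compositions l N" by (auto simp: S_def)
    show "\<forall>p\<in>decr l N \<times> weak_compositions l N - S. (case p of (u, m) \<Rightarrow> H u m) = 0"
    proof (clarify)
      fix u m assume "(u, m) \<notin> S" "u \<in> decr l N" "m \<in> weak_compositions l N"
      then obtain j where j: "j < l" "\<not> (u!j dvd m!j \<and> 0 < m!j)" by (auto simp: S_def)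
      have "1 \<le> es!j" using es j by (simp add: l_def)
      then obtain e where "es!j = Suc e" by (cases "es!j") auto
      with j show "H u m = 0"
        unfolding H_def by (intro prod_zero bexI [of _ j]) auto
    qed
  qed
  also have "\<dots> = (\<Sum>(u,v)\<in>bibr_pairs l N. H u (map (\<lambda>j. u!j * v!j) [0..<l]))"
    unfolding S_def by (rule sum_divisor_compositions)
  also have "\<dots> = (\<Sum>(u,v)\<in>bibr_pairs l N. (\<Prod>j<l. Lpow_weight (es!j) (v!j)) * exp_monomial l a b u v)"
    by (intro sum.cong refl)
       (auto simp: H_def exp_monomial_def bibr_pairs_def all_set_conv_all_nth prod.distrib [symmetric]
             mult_ac intro!: prod.cong)
  finally show "fps_nth (Tgen es a b) N =
      fps_nth (exp_series (length es) (\<lambda>u v. \<Prod>j<length es. Lpow_weight (es!j) (v!j)) a b) N"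
    by (simp add: exp_series_def l_def)
qed

lemma Tbi_exp_series: "length a = l \<Longrightarrow> Tbi a b = exp_series l (\<lambda>_ _. 1) a b"
  unfolding Tbi_def bibr_def exp_series_def bibr_pairs_def exp_monomial_def
  by (rule fps_ext) (auto intro!: sum.cong prod.cong)

section \<open>The operator \<open>D^Y\<close> on exponential series\<close>

definition has_exp_weight :: "nat \<Rightarrow> mser \<Rightarrow> (nat list \<Rightarrow> nat list \<Rightarrow> rat) \<Rightarrow> bool" where
  "has_exp_weight l c g \<longleftrightarrow> (\<forall>a b. length a = l \<longrightarrow> length b = l \<longrightarrow> c a b = exp_series l g a b)"

lemma has_exp_weight_cong: "has_exp_weight l c g \<Longrightarrow> (\<And>u v. g u v = h u v) \<Longrightarrow> has_exp_weight l c h"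
  by (metis ext)

lemma exp_monomial_bump:
  assumes k: "k < l" and lb: "length b = l"
  shows "of_nat (b!k + 1) * exp_monomial l a (b[k := b!k + 1]) u v = of_nat (u!k) * exp_monomial l a b u v"
proof -
  define F where "F bb j = (of_nat (u!j) ^ (bb!j) / fact (bb!j)) * (of_nat (v!j) ^ (a!j) / fact (a!j) :: rat)"
    for bb j
  define R where "R = (\<Prod>j\<in>{..<l} - {k}. F b j)"
  have kin: "k \<in> {..<l}" using k by simp
  have "exp_monomial l a (b[k := b!k + 1]) u v = F (b[k := b!k + 1]) k * (\<Prod>j\<in>{..<l} - {k}. F (b[k := b!k + 1]) j)"
    unfolding exp_monomial_def F_def [symmetric] by (rule prod.remove [OF _ kin]) simp
  also have "(\<Prod>j\<in>{..<l} - {k}. F (b[k := b!k + 1]) j) = R"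
    unfolding R_def by (rule prod.cong) (auto simp: F_def)
  finally have bumped: "exp_monomial l a (b[k := b!k + 1]) u v = F (b[k := b!k + 1]) k * R" .
  have unbumped: "exp_monomial l a b u v = F b k * R"
    unfolding exp_monomial_def F_def [symmetric] R_def by (rule prod.remove [OF _ kin]) simp
  have "of_nat (b!k + 1) * F (b[k := b!k + 1]) k = of_nat (u!k) * F b k"
    using k lb by (simp add: F_def field_simps del: of_nat_Suc)
  then show ?thesis unfolding bumped unbumped by (metis mult.assoc)
qed

lemma dY_exp_series:
  assumes c: "has_exp_weight l c g" and la: "length a = l" and lb: "length b = l"
  shows "dY l k c a b = exp_series l (\<lambda>u v. g u v * (if k < l then of_nat (u!k) else 0)) a b"
proof (cases "k < l")
  case False
  then show ?thesis by (auto simp: dY_def exp_series_def intro!: fps_ext)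
next
  case True
  have "dY l k c a b = of_nat (b!k + 1) * exp_series l g a (b[k := b!k + 1])"
    using True c la lb by (simp add: dY_def has_exp_weight_def)
  also have "\<dots> = exp_series l (\<lambda>u v. g u v * (if k < l then of_nat (u!k) else 0)) a b"
  proof (rule fps_ext)
    fix N
    have "fps_nth (of_nat (b!k + 1) * exp_series l g a (b[k := b!k + 1])) N
        = (\<Sum>(u,v)\<in>bibr_pairs l N. g u v * (of_nat (b!k + 1) * exp_monomial l a (b[k := b!k + 1]) u v))"
      unfolding fps_mult_of_nat_nth exp_series_def fps_nth_Abs_fps sum_distrib_left
      by (rule sum.cong) (auto simp: mult_ac)
    also have "\<dots> = (\<Sum>(u,v)\<in>bibr_pairs l N. g u v * (if k < l then of_nat (u!k) else 0) * exp_monomial l a b u v)"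
      by (intro sum.cong refl) (simp only: split_def exp_monomial_bump [OF True lb] mult.assoc if_P [OF True])
    finally show "fps_nth (of_nat (b!k + 1) * exp_series l g a (b[k := b!k + 1])) N
       = fps_nth (exp_series l (\<lambda>u v. g u v * (if k < l then of_nat (u!k) else 0)) a b) N"
      by (simp add: exp_series_def)
  qed
  finally show ?thesis .
qed

text \<open>The eigenvalue of the factor \<open>Dstep l j k\<close> on \<open>\<Prod>i. exp (u_i Y_i)\<close>; the second
  term is absent for \<open>j = 1\<close>, where \<open>\<partial>/\<partial>Y_(l+1) = 0\<close>.\<close>

definition Dstep_weight :: "nat \<Rightarrow> nat \<Rightarrow> nat \<Rightarrow> nat list \<Rightarrow> rat" where
  "Dstep_weight l j k u =
     (of_nat (u!(l-j)) - (if l-j+1 < l then of_nat (u!(l-j+1)) else 0)) / of_nat k - 1"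

lemma Dstep_has_exp_weight:
  assumes c: "has_exp_weight l c g" and j: "1 \<le> j" "j \<le> l"
  shows "has_exp_weight l (Dstep l j k c) (\<lambda>u v. g u v * Dstep_weight l j k u)"
  unfolding has_exp_weight_def
proof (intro allI impI fps_ext)
  fix a b :: "nat list" and N assume la: "length a = l" and lb: "length b = l"
  have "fps_nth (Dstep l j k c a b) N = 1 / of_nat k *
      ((\<Sum>(u,v)\<in>bibr_pairs l N. g u v * (if l-j < l then of_nat (u!(l-j)) else 0) * exp_monomial l a b u v)
      - (\<Sum>(u,v)\<in>bibr_pairs l N. g u v * (if l-j+1 < l then of_nat (u!(l-j+1)) else 0) * exp_monomial l a b u v))
      - (\<Sum>(u,v)\<in>bibr_pairs l N. g u v * exp_monomial l a b u v)"
    unfolding Dstep_def dY_exp_series [OF c la lb] using c la lb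
    by (simp add: exp_series_def has_exp_weight_def)
  also have "\<dots> = (\<Sum>(u,v)\<in>bibr_pairs l N. g u v * Dstep_weight l j k u * exp_monomial l a b u v)"
    using j by (simp add: sum_subtractf [symmetric] sum_distrib_left case_prod_beta Dstep_weight_def
        algebra_simps diff_divide_distrib)
  finally show "fps_nth (Dstep l j k c a b) N = fps_nth (exp_series l (\<lambda>u v. g u v * Dstep_weight l j k u) a b) N"
    by (simp add: exp_series_def)
qed

lemma DYj_has_exp_weight:
  assumes c: "has_exp_weight l c g" and j: "1 \<le> j" "j \<le> l"
  shows "has_exp_weight l (DYj l j e c) (\<lambda>u v. g u v * (\<Prod>k\<in>{1..<e}. Dstep_weight l j k u))"
proof (induction e)
  case 0
  show ?case using c by (simp add: DYj_def)
next
  case (Suc e)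
  show ?case
  proof (cases "e = 0")
    case True
    then show ?thesis using c by (simp add: DYj_def)
  next
    case False
    then have "DYj l j (Suc e) c = Dstep l j e (DYj l j e c)"
      by (simp add: DYj_def)
    moreover have "has_exp_weight l (Dstep l j e (DYj l j e c))
        (\<lambda>u v. (g u v * (\<Prod>k\<in>{1..<e}. Dstep_weight l j k u)) * Dstep_weight l j e u)"
      by (rule Dstep_has_exp_weight [OF Suc j])
    ultimately show ?thesis using False
      by (auto simp: prod.atLeastLessThan_Suc mult_ac elim!: has_exp_weight_cong)
  qed
qed

lemma DY_Tbi_has_exp_weight:
  "has_exp_weight (length es) (DY es Tbi)
     (\<lambda>u v. \<Prod>j\<in>{1..<Suc (length es)}. \<Prod>k\<in>{1..<es!(j-1)}. Dstep_weight (length es) j k u)"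
proof -
  let ?l = "length es"
  define w where "w j u = (\<Prod>k\<in>{1..<es!(j-1)}. Dstep_weight ?l j k u)" for j u
  have fold: "has_exp_weight ?l (foldr (\<lambda>j. DYj ?l j (es!(j-1))) js Tbi) (\<lambda>u v. \<Prod>j\<in>set js. w j u)"
    if "distinct js" "\<forall>j\<in>set js. 1 \<le> j \<and> j \<le> ?l" for js
    using that
  proof (induction js)
    case Nil
    show ?case by (simp add: has_exp_weight_def Tbi_exp_series)
  next
    case (Cons j js)
    have "has_exp_weight ?l (foldr (\<lambda>j. DYj ?l j (es!(j-1))) js Tbi) (\<lambda>u v. \<Prod>j\<in>set js. w j u)"
      using Cons by simp
    from DYj_has_exp_weight [OF this, of j "es!(j-1)"]
    have step: "has_exp_weight ?l (foldr (\<lambda>j. DYj ?l j (es!(j-1))) (j # js) Tbi)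
        (\<lambda>u v. (\<Prod>j\<in>set js. w j u) * w j u)"
      using Cons.prems by (simp add: w_def)
    have "(\<Prod>i\<in>set js. w i u) * w j u = (\<Prod>i\<in>set (j # js). w i u)" for u
      using Cons.prems by (simp add: mult.commute)
    then show ?case by (rule has_exp_weight_cong [OF step])
  qed
  have "has_exp_weight ?l (DY es Tbi) (\<lambda>u v. \<Prod>j\<in>set [1..<Suc ?l]. w j u)"
    unfolding DY_def by (rule fold) auto
  then show ?thesis by (simp only: set_upt w_def)
qed

text \<open>\<open>binom(n-1, e) = \<Prod>k=1..e. (n/k - 1)\<close>: the eigenvalue of \<open>D_(Y_j,e+1)\<close> is the weight
  of \<open>L^(e+1)\<close>.\<close>

lemma Lpow_weight_eq_prod:
  assumes "1 \<le> n"
  shows "Lpow_weight (Suc e) n = (\<Prod>k\<in>{1..<Suc e}. of_nat n / of_nat k - 1)"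
proof (induction e)
  case 0
  show ?case using assms by (simp add: Lpow_weight_def)
next
  case (Suc e)
  have diff: "(of_nat ((n-1) choose e) * of_nat (n - 1 - e) :: rat)
      = of_nat ((n-1) choose e) * (of_nat n - 1 - of_nat e)"
    using assms by (cases "n - 1 < e") (simp_all add: of_nat_diff)
  have "of_nat ((n-1) choose Suc e) * of_nat (Suc e) = (of_nat ((n-1) choose e) * of_nat (n - 1 - e) :: rat)"
    by (metis binomial_absorb_comp binomial_absorption mult.commute of_nat_mult)
  then have "of_nat ((n-1) choose Suc e) = (of_nat ((n-1) choose e) * (of_nat n / of_nat (Suc e) - 1) :: rat)"
    unfolding diff by (simp add: field_simps)
  then show ?case using Suc assms by (simp add: Lpow_weight_def prod.atLeastLessThan_Suc)
qed

section \<open>The duality \<open>(u, v) \<mapsto> (partial sums of v, differences of u)\<close>\<close>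

text \<open>With 1-based indices, entry \<open>i\<close> of \<open>partial_sums l w\<close> is \<open>w_1 + \<dots> + w_(l-i+1)\<close> and
  entry \<open>i\<close> of \<open>differences l u\<close> is \<open>u_(l-i+1) - u_(l-i+2)\<close> (with \<open>u_(l+1) = 0\<close>), matching
  the substituted variables of the theorem.\<close>

definition partial_sums :: "nat \<Rightarrow> nat list \<Rightarrow> nat list" where
  "partial_sums l w = map (\<lambda>i. \<Sum>j<l-i. w!j) [0..<l]"

definition differences :: "nat \<Rightarrow> nat list \<Rightarrow> nat list" where
  "differences l u = map (\<lambda>i. u!(l-1-i) - (if i = 0 then 0 else u!(l-i))) [0..<l]"

lemma length_partial_sums [simp]: "length (partial_sums l w) = l"
  by (simp add: partial_sums_def)

lemma length_differences [simp]: "length (differences l u) = l"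
  by (simp add: differences_def)

lemma nth_partial_sums: "i < l \<Longrightarrow> partial_sums l w ! i = (\<Sum>j<l-i. w!j)"
  by (simp add: partial_sums_def)

lemma nth_differences: "i < l \<Longrightarrow> differences l u ! i = u!(l-1-i) - (if i = 0 then 0 else u!(l-i))"
  by (simp add: differences_def)

lemma of_nat_nth_differences:
  assumes "sorted_wrt (>) u" "length u = l" "i < l"
  shows "(of_nat (differences l u ! i) :: 'a::ring_1) =
    of_nat (u!(l-1-i)) - (if i = 0 then 0 else of_nat (u!(l-i)))"
proof (cases "i = 0")
  case False
  have "u!(l-i) < u!(l-1-i)"
    using sorted_wrt_nth_less [OF assms(1), of "l-1-i" "l-i"] assms False by auto
  then show ?thesis using assms False by (simp add: nth_differences of_nat_diff)
qed (use assms in \<open>simp add: nth_differences\<close>)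

lemma differences_pos:
  assumes "sorted_wrt (>) u" "length u = l" "\<forall>x\<in>set u. 0 < x" "i < l"
  shows "0 < differences l u ! i"
proof (cases "i = 0")
  case False
  have "u!(l-i) < u!(l-1-i)"
    using sorted_wrt_nth_less [OF assms(1), of "l-1-i" "l-i"] assms False by auto
  then show ?thesis using assms False by (simp add: nth_differences)
qed (use assms in \<open>simp add: nth_differences\<close>)

lemma sum_differences:
  assumes "sorted_wrt (>) u" "length u = l" "1 \<le> n" "n \<le> l"
  shows "(\<Sum>j<n. differences l u ! j) = u!(l-n)"
  using assms(3,4)
proof (induction n)
  case (Suc n)
  show ?case
  proof (cases "n = 0")
    case False
    then have "(\<Sum>j<Suc n. differences l u ! j) = u!(l-n) + (u!(l-1-n) - u!(l-n))"
      using Suc by (simp add: nth_differences)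
    also have "\<dots> = u!(l - Suc n)"
    proof -
      have "l - Suc n < l - n" "l - n < length u" using assms(2) Suc False by auto
      from sorted_wrt_nth_less [OF assms(1) this] show ?thesis by simp
    qed
    finally show ?thesis .
  qed (use Suc in \<open>simp add: nth_differences\<close>)
qed simp

lemma partial_sums_differences:
  assumes "sorted_wrt (>) u" "length u = l"
  shows "partial_sums l (differences l u) = u"
  using assms by (intro nth_equalityI) (simp_all add: nth_partial_sums sum_differences)

lemma differences_partial_sums:
  assumes l: "length v = l"
  shows "differences l (partial_sums l v) = v"
proof (rule nth_equalityI)
  fix i assume "i < length (differences l (partial_sums l v))"
  then have i: "i < l" by simp
  have "partial_sums l v ! (l-1-i) = (\<Sum>j<Suc i. v!j)"
    using i by (simp add: nth_partial_sums Suc_diff_Suc)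
  moreover have "i \<noteq> 0 \<Longrightarrow> partial_sums l v ! (l-i) = (\<Sum>j<i. v!j)"
    using i by (simp add: nth_partial_sums)
  ultimately show "differences l (partial_sums l v) ! i = v ! i"
    using i by (cases "i = 0") (simp_all add: nth_differences)
qed (use l in simp)

lemma sum_triangle_swap:
  "(\<Sum>j<(l::nat). \<Sum>i<l-j. f j i) = (\<Sum>i<l. \<Sum>j<l-i. (f j i :: 'a::comm_monoid_add))"
proof -
  have triangle: "(\<Sum>i<l-j. g i) = (\<Sum>i<l. if i + j < l then g i else 0)" for j and g :: "nat \<Rightarrow> 'a"
  proof -
    have "{i\<in>{..<l}. i + j < l} = {..<l-j}" by auto
    then show ?thesis using sum.inter_filter [of "{..<l}" g "\<lambda>i. i + j < l"] by simp
  qed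
  have "(\<Sum>j<l. \<Sum>i<l-j. f j i) = (\<Sum>j<l. \<Sum>i<l. if i + j < l then f j i else 0)"
    by (simp add: triangle)
  also have "\<dots> = (\<Sum>i<l. \<Sum>j<l. if i + j < l then f j i else 0)"
    by (rule sum.swap)
  also have "\<dots> = (\<Sum>i<l. \<Sum>j<l-i. f j i)"
    by (simp add: triangle add.commute)
  finally show ?thesis .
qed

lemma sum_partial_sums_mult_differences:
  assumes s: "sorted_wrt (>) u" and l: "length u = l"
  shows "(\<Sum>i<l. partial_sums l v ! i * differences l u ! i) = (\<Sum>j<l. u!j * v!j)"
proof -
  have "(\<Sum>j<l. u!j * v!j) = (\<Sum>j<l. (\<Sum>i<l-j. differences l u ! i) * v!j)"
  proof (rule sum.cong [OF refl])
    fix j assume j: "j \<in> {..<l}"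
    have "u!j = partial_sums l (differences l u) ! j" using partial_sums_differences [OF s l] by simp
    then show "u!j * v!j = (\<Sum>i<l-j. differences l u ! i) * v!j" using j by (simp add: nth_partial_sums)
  qed
  also have "\<dots> = (\<Sum>j<l. \<Sum>i<l-j. differences l u ! i * v!j)"
    by (simp add: sum_distrib_right)
  also have "\<dots> = (\<Sum>i<l. \<Sum>j<l-i. differences l u ! i * v!j)"
    by (rule sum_triangle_swap)
  also have "\<dots> = (\<Sum>i<l. partial_sums l v ! i * differences l u ! i)"
    by (simp add: nth_partial_sums sum_distrib_left mult.commute)
  finally show ?thesis by simp
qed

definition bibr_dual :: "nat \<Rightarrow> nat list \<times> nat list \<Rightarrow> nat list \<times> nat list" where
  "bibr_dual l p = (partial_sums l (snd p), differences l (fst p))"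

lemma sorted_partial_sums:
  assumes "\<forall>x\<in>set v. 0 < x" "length v = l"
  shows "sorted_wrt (>) (partial_sums l v)"
proof (clarsimp simp: sorted_wrt_iff_nth_less)
  fix i j assume ij: "i < j" "j < l"
  have "(\<Sum>k<l-j. v!k) < (\<Sum>k<Suc (l-j). v!k)" using assms ij by (simp add: all_set_conv_all_nth)
  also have "\<dots> \<le> (\<Sum>k<l-i. v!k)" by (rule sum_mono2) (use ij in auto)
  finally show "partial_sums l v ! j < partial_sums l v ! i" using ij by (simp add: nth_partial_sums)
qed

lemma partial_sums_pos:
  assumes "\<forall>x\<in>set v. 0 < x" "length v = l" "i < l"
  shows "0 < partial_sums l v ! i"
proof -
  have "v!0 \<le> (\<Sum>k<l-i. v!k)" by (rule member_le_sum) (use assms in auto)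
  moreover have "0 < v!0" using assms by (auto simp: all_set_conv_all_nth)
  ultimately have "0 < (\<Sum>k<l-i. v!k)" by linarith
  then show ?thesis using assms by (simp add: nth_partial_sums)
qed

lemma bibr_dual_in_bibr_pairs:
  assumes p: "p \<in> bibr_pairs l N"
  shows "bibr_dual l p \<in> bibr_pairs l N"
proof -
  obtain u v where uv: "p = (u,v)" by (cases p)
  have lu: "length u = l" and lv: "length v = l" and s: "sorted_wrt (>) u"
    and up: "\<forall>x\<in>set u. 0 < x" and vp: "\<forall>x\<in>set v. 0 < x" and sN: "(\<Sum>j<l. u!j * v!j) = N"
    using p uv by (auto simp: bibr_pairs_def)
  show ?thesis
    using uv sorted_partial_sums [OF vp lv] partial_sums_pos [OF vp lv] differences_pos [OF s lu up]
      sum_partial_sums_mult_differences [OF s lu, of v] sN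
    by (auto simp: bibr_pairs_def bibr_dual_def all_set_conv_all_nth)
qed

lemma bibr_dual_involution: "p \<in> bibr_pairs l N \<Longrightarrow> bibr_dual l (bibr_dual l p) = p"
  by (auto simp: bibr_dual_def bibr_pairs_def partial_sums_differences differences_partial_sums)

section \<open>Linear substitutions and the exponential monomial\<close>

definition pconst :: "rat \<Rightarrow> rpoly" where
  "pconst r = Poly_Mapping.single 0 r"

lemma pconst_mult: "pconst (r * s) = pconst r * pconst s"
  by (simp add: pconst_def mult_single)

lemma pconst_add: "pconst (r + s) = pconst r + pconst s"
  by (simp add: pconst_def single_add)

lemma pconst_diff: "pconst (r - s) = pconst r - pconst s"
  by (simp add: pconst_def single_diff)

lemma pconst_1: "pconst 1 = 1"
  by (simp add: pconst_def)

lemma pconst_0: "pconst 0 = 0"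
  by (simp add: pconst_def)

lemma pconst_of_nat: "pconst (of_nat n) = of_nat n"
  by (simp add: pconst_def)

lemma pconst_power: "pconst (r ^ n) = pconst r ^ n"
  by (induction n) (simp_all add: pconst_1 pconst_mult)

lemma pconst_prod: "pconst (prod f A) = (\<Prod>x\<in>A. pconst (f x))"
  by (induction A rule: infinite_finite_induct) (simp_all add: pconst_1 pconst_mult)

lemma pconst_sum: "pconst (sum f A) = (\<Sum>x\<in>A. pconst (f x))"
  by (induction A rule: infinite_finite_induct) (simp_all add: pconst_0 pconst_add)

lemma lookup_pconst_mult: "Poly_Mapping.lookup (pconst r * p) m = r * Poly_Mapping.lookup p m"
  unfolding pconst_def
  by (smt (verit, best) map.rep_eq mult_map_scale_conv_mult mult_zero_right when_def)

lemma pvar_power: "pvar k ^ n = Poly_Mapping.single (Poly_Mapping.single k n) 1"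
proof (induction n)
  case (Suc n)
  have "pvar k ^ Suc n = pvar k * pvar k ^ n" by simp
  also have "\<dots> = Poly_Mapping.single (Poly_Mapping.single k 1 + Poly_Mapping.single k n) 1"
    unfolding Suc.IH by (simp add: pvar_def mult_single)
  finally show ?case by (simp add: single_add [symmetric])
qed simp

definition monom_of_list :: "nat \<Rightarrow> nat list \<Rightarrow> (nat \<Rightarrow>\<^sub>0 nat)" where
  "monom_of_list m \<beta> = (\<Sum>k<m. Poly_Mapping.single k (\<beta>!k))"

lemma lookup_monom_of_list: "i < m \<Longrightarrow> Poly_Mapping.lookup (monom_of_list m \<beta>) i = \<beta>!i"
  by (simp add: monom_of_list_def lookup_sum lookup_single when_def)

lemma monom_of_list_eq_iff:
  "length \<beta> = m \<Longrightarrow> length \<beta>' = m \<Longrightarrow> monom_of_list m \<beta> = monom_of_list m \<beta>' \<longleftrightarrow> \<beta> = \<beta>'"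
  by (auto intro: nth_equalityI
      dest: arg_cong [where f = "\<lambda>p. Poly_Mapping.lookup p _"] simp: lookup_monom_of_list [symmetric])

lemma prod_pvar_power: "(\<Prod>k<m. pvar k ^ (\<beta>!k)) = Poly_Mapping.single (monom_of_list m \<beta>) 1"
proof -
  have "(\<Prod>k\<in>A. Poly_Mapping.single (f k) (1::rat)) = Poly_Mapping.single (\<Sum>k\<in>A. f k) 1"
    if "finite A" for A and f :: "nat \<Rightarrow> nat \<Rightarrow>\<^sub>0 nat"
    using that by (induction A rule: finite_induct) (simp_all add: mult_single)
  then show ?thesis by (simp add: pvar_power monom_of_list_def)
qed

lemma prod_pconst_mult_power:
  "(\<Prod>i<m. (pconst (c i) * F i) ^ (z!i) * pconst (1 / fact (z!i)))
   = pconst (\<Prod>i<m. c i ^ (z!i) / fact (z!i)) * (\<Prod>i<m. F i ^ (z!i))"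
proof -
  have "(\<Prod>i<m. (pconst (c i) * F i) ^ (z!i) * pconst (1 / fact (z!i)))
      = (\<Prod>i<m. pconst (c i ^ (z!i) / fact (z!i)) * F i ^ (z!i))"
    by (rule prod.cong)
       (simp_all add: power_mult_distrib pconst_power [symmetric] pconst_mult [symmetric] mult_ac)
  then show ?thesis by (simp add: prod.distrib pconst_prod)
qed

lemma multinomial_exp_degree:
  "(\<Sum>z\<in>weak_compositions m D. \<Prod>i<m. G i ^ (z!i) * pconst (1 / fact (z!i)))
   = (\<Sum>i<m. G i) ^ D * pconst (1 / fact D)"
proof (induction m arbitrary: G D)
  case 0
  show ?case by (cases D) (simp_all add: weak_compositions_0 pconst_1)
next
  case (Suc m)
  define S where "S = (\<Sum>i<m. G (Suc i))"
  have binom: "(G 0 ^ k * pconst (1 / fact k)) * (S ^ (D-k) * pconst (1 / fact (D-k)))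
      = of_nat (D choose k) * G 0 ^ k * S ^ (D - k) * pconst (1 / fact D)" if k: "k \<le> D" for k
  proof -
    have "pconst (1 / fact k) * pconst (1 / fact (D-k)) = of_nat (D choose k) * pconst (1 / fact D)"
      using k by (simp add: pconst_mult [symmetric] pconst_of_nat [symmetric] binomial_fact field_simps)
    then show ?thesis by (metis (no_types, lifting) mult.assoc mult.left_commute)
  qed
  have "(\<Sum>w\<in>weak_compositions (Suc m) D. \<Prod>i<Suc m. G i ^ (w!i) * pconst (1 / fact (w!i)))
      = (\<Sum>k=0..D. (G 0 ^ k * pconst (1 / fact k)) * (S ^ (D-k) * pconst (1 / fact (D-k))))"
    by (subst sum_weak_compositions_Suc [where f = "\<lambda>i k. G i ^ k * pconst (1 / fact k)"])
       (simp only: Suc.IH S_def)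
  also have "\<dots> = (\<Sum>k\<le>D. of_nat (D choose k) * G 0 ^ k * S ^ (D - k)) * pconst (1 / fact D)"
    unfolding atLeast0AtMost sum_distrib_right by (intro sum.cong refl binom) simp
  also have "\<dots> = (\<Sum>i<Suc m. G i) ^ D * pconst (1 / fact D)"
    unfolding sum.lessThan_Suc_shift S_def [symmetric] binomial_ring ..
  finally show ?case .
qed

text \<open>Comparing the coefficients of \<open>x^\<beta>\<close> in the degree-\<open>D\<close> parts of
  \<open>exp (\<Sum>i. c_i F_i) = exp (\<Sum>k. d_k x_k)\<close>.\<close>

lemma coeff_exp_linear_substitution:
  assumes lin: "(\<Sum>i<m. pconst (c i) * F i) = (\<Sum>k<m'. pconst (d k) * pvar k)"
    and \<beta>: "\<beta> \<in> weak_compositions m' D"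
  shows "(\<Sum>z\<in>weak_compositions m D. (\<Prod>i<m. c i ^ (z!i) / fact (z!i)) *
            Poly_Mapping.lookup (\<Prod>i<m. F i ^ (z!i)) (monom_of_list m' \<beta>))
       = (\<Prod>k<m'. d k ^ (\<beta>!k) / fact (\<beta>!k))"
proof -
  let ?coeff = "\<lambda>\<beta>. \<Prod>k<m'. d k ^ (\<beta>!k) / fact (\<beta>!k)"
  have "(\<Sum>z\<in>weak_compositions m D. pconst (\<Prod>i<m. c i ^ (z!i) / fact (z!i)) * (\<Prod>i<m. F i ^ (z!i)))
      = (\<Sum>i<m. pconst (c i) * F i) ^ D * pconst (1 / fact D)"
    by (simp add: multinomial_exp_degree [symmetric] prod_pconst_mult_power)
  also have "\<dots> = (\<Sum>\<beta>\<in>weak_compositions m' D. pconst (?coeff \<beta>) * Poly_Mapping.single (monom_of_list m' \<beta>) 1)"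
    by (simp add: lin multinomial_exp_degree [symmetric] prod_pconst_mult_power prod_pvar_power)
  finally have "(\<Sum>z\<in>weak_compositions m D. (\<Prod>i<m. c i ^ (z!i) / fact (z!i)) *
            Poly_Mapping.lookup (\<Prod>i<m. F i ^ (z!i)) (monom_of_list m' \<beta>))
      = (\<Sum>\<beta>'\<in>weak_compositions m' D.
            ?coeff \<beta>' * Poly_Mapping.lookup (Poly_Mapping.single (monom_of_list m' \<beta>') 1) (monom_of_list m' \<beta>))"
    by (auto simp: lookup_sum lookup_pconst_mult
        dest: arg_cong [where f = "\<lambda>p. Poly_Mapping.lookup p (monom_of_list m' \<beta>)"])
  also have "\<dots> = (\<Sum>\<beta>'\<in>weak_compositions m' D. if \<beta>' = \<beta> then ?coeff \<beta>' else 0)"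
    using \<beta> by (intro sum.cong refl)
      (auto simp: lookup_single when_def weak_compositions_def monom_of_list_eq_iff)
  also have "\<dots> = ?coeff \<beta>"
    using \<beta> by (simp add: finite_weak_compositions)
  finally show ?thesis .
qed

lemma sum_lessThan_add: "(\<Sum>i<m + (n::nat). f i) = (\<Sum>i<m. f i) + (\<Sum>i<n. (f (m + i) :: 'a::comm_monoid_add))"
  by (induction n) (simp_all add: add_ac)

lemma prod_lessThan_add: "(\<Prod>i<m + (n::nat). f i) = (\<Prod>i<m. f i) * (\<Prod>i<n. (f (m + i) :: 'a::comm_monoid_mult))"
  by (induction n) (simp_all add: mult_ac)

lemma sum_pairs_eq_sum_weak_compositions:
  "(\<Sum>(a,b)\<in>{(a,b). length a = l \<and> length b = l \<and> sum_list a + sum_list b = D}. h a b)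
   = (\<Sum>z\<in>weak_compositions (l + l) D. h (take l z) (drop l z))"
proof (rule sum.reindex_bij_witness [where j = "\<lambda>(a,b). a @ b" and i = "\<lambda>z. (take l z, drop l z)"])
  fix z assume z: "z \<in> weak_compositions (l + l) D"
  have "sum_list (take l z) + sum_list (drop l z) = sum_list z"
    by (metis append_take_drop_id sum_list_append)
  then show "(take l z, drop l z) \<in> {(a,b). length a = l \<and> length b = l \<and> sum_list a + sum_list b = D}"
    using z by (auto simp: weak_compositions_def)
qed (auto simp: weak_compositions_def)

lemma sum_Xsub_eq:
  "(\<Sum>j<l. pconst (of_nat (v!j)) * Xsub l j) = (\<Sum>i<l. pconst (of_nat (partial_sums l v ! i)) * pvar (l + i))"
proof -
  have "(\<Sum>j<l. pconst (of_nat (v!j)) * Xsub l j) = (\<Sum>j<l. \<Sum>i<l-j. pconst (of_nat (v!j)) * pvar (l + i))"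
    by (simp add: Xsub_def sum_distrib_left)
  also have "\<dots> = (\<Sum>i<l. \<Sum>j<l-i. pconst (of_nat (v!j)) * pvar (l + i))"
    by (rule sum_triangle_swap)
  also have "\<dots> = (\<Sum>i<l. pconst (of_nat (partial_sums l v ! i)) * pvar (l + i))"
    by (simp add: nth_partial_sums pconst_sum sum_distrib_right)
  finally show ?thesis .
qed

lemma sum_Ysub_eq:
  assumes s: "sorted_wrt (>) u" and l: "length u = l"
  shows "(\<Sum>j<l. pconst (of_nat (u!j)) * Ysub l j) = (\<Sum>i<l. pconst (of_nat (differences l u ! i)) * pvar i)"
proof -
  have "(\<Sum>j<l. pconst (of_nat (u!j)) * Ysub l j)
      = (\<Sum>j<l. pconst (of_nat (u!j)) * pvar (l-1-j))
        - (\<Sum>j<l. if j = 0 then 0 else pconst (of_nat (u!j)) * pvar (l-j))"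
    by (simp add: Ysub_def diff_commute right_diff_distrib sum_subtractf [symmetric] if_distrib cong: if_cong)
  also have "(\<Sum>j<l. pconst (of_nat (u!j)) * pvar (l-1-j)) = (\<Sum>i<l. pconst (of_nat (u!(l-1-i))) * pvar i)"
    by (rule sum.reindex_bij_witness [where i = "\<lambda>j. l-1-j" and j = "\<lambda>j. l-1-j"]) auto
  also have "(\<Sum>j<l. if j = 0 then 0 else pconst (of_nat (u!j)) * pvar (l-j))
      = (\<Sum>i<l. if i = 0 then 0 else pconst (of_nat (u!(l-i))) * pvar i)"
    by (rule sum.reindex_bij_witness [where i = "\<lambda>j. if j = 0 then 0 else l - j"
          and j = "\<lambda>j. if j = 0 then 0 else l - j"]) auto
  also have "(\<Sum>i<l. pconst (of_nat (u!(l-1-i))) * pvar i)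
        - (\<Sum>i<l. if i = 0 then 0 else pconst (of_nat (u!(l-i))) * pvar i)
      = (\<Sum>i<l. pconst (of_nat (differences l u ! i)) * pvar i)"
    unfolding sum_subtractf [symmetric]
    by (intro sum.cong refl) (simp add: of_nat_nth_differences [OF s l] pconst_diff pconst_0 left_diff_distrib)
  finally show ?thesis .
qed

lemma exp_monomial_substitution:
  assumes la: "length a = l" and lb: "length b = l" and lu: "length u = l" and lv: "length v = l"
    and s: "sorted_wrt (>) u"
  shows "(\<Sum>(a',b')\<in>{(a',b'). length a' = l \<and> length b' = l \<and> sum_list a' + sum_list b' = sum_list a + sum_list b}.
            Poly_Mapping.lookup (\<Prod>j<l. Xsub l j ^ (a'!j) * Ysub l j ^ (b'!j)) (pmono l a b)
            * exp_monomial l a' b' u v)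
       = exp_monomial l a b (partial_sums l v) (differences l u)"
proof -
  define D where "D = sum_list a + sum_list b"
  define F where "F i = (if i < l then Xsub l i else Ysub l (i-l))" for i
  define c where "c i = (if i < l then (of_nat (v!i)::rat) else of_nat (u!(i-l)))" for i
  define d where "d k = (if k < l then (of_nat (differences l u ! k)::rat) else of_nat (partial_sums l v ! (k-l)))"
    for k
  have monom: "monom_of_list (l + l) (a @ b) = pmono l a b"
    unfolding monom_of_list_def pmono_def sum_lessThan_add using la by (simp add: nth_append sum.distrib)
  have lin: "(\<Sum>i<l + l. pconst (c i) * F i) = (\<Sum>k<l + l. pconst (d k) * pvar k)"
    unfolding sum_lessThan_add using sum_Xsub_eq [where l = l and v = v] sum_Ysub_eq [OF s lu]
    by (simp add: F_def c_def d_def add.commute)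
  have "(\<Sum>(a',b')\<in>{(a',b'). length a' = l \<and> length b' = l \<and> sum_list a' + sum_list b' = D}.
            Poly_Mapping.lookup (\<Prod>j<l. Xsub l j ^ (a'!j) * Ysub l j ^ (b'!j)) (pmono l a b)
            * exp_monomial l a' b' u v)
     = (\<Sum>z\<in>weak_compositions (l + l) D. (\<Prod>i<l + l. c i ^ (z!i) / fact (z!i)) *
            Poly_Mapping.lookup (\<Prod>i<l + l. F i ^ (z!i)) (monom_of_list (l + l) (a @ b)))"
    unfolding sum_pairs_eq_sum_weak_compositions
  proof (rule sum.cong [OF refl])
    fix z assume "z \<in> weak_compositions (l + l) D"
    then have lz: "length z = l + l" by (simp add: weak_compositions_def)
    have "(\<Prod>i<l + l. F i ^ (z!i)) = (\<Prod>j<l. Xsub l j ^ (take l z ! j) * Ysub l j ^ (drop l z ! j))"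
      unfolding prod_lessThan_add prod.distrib using lz by (simp add: F_def)
    moreover have "(\<Prod>i<l + l. c i ^ (z!i) / fact (z!i)) = exp_monomial l (take l z) (drop l z) u v"
      unfolding prod_lessThan_add exp_monomial_def prod.distrib [symmetric] using lz
      by (intro prod.cong) (simp_all add: c_def mult_ac)
    ultimately show "Poly_Mapping.lookup (\<Prod>j<l. Xsub l j ^ (take l z ! j) * Ysub l j ^ (drop l z ! j)) (pmono l a b)
        * exp_monomial l (take l z) (drop l z) u v
      = (\<Prod>i<l + l. c i ^ (z!i) / fact (z!i)) *
        Poly_Mapping.lookup (\<Prod>i<l + l. F i ^ (z!i)) (monom_of_list (l + l) (a @ b))"
      by (simp add: monom)
  qed
  also have "\<dots> = (\<Prod>k<l + l. d k ^ ((a @ b)!k) / fact ((a @ b)!k))"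
    by (rule coeff_exp_linear_substitution [OF lin]) (use la lb in \<open>simp add: weak_compositions_def D_def\<close>)
  also have "\<dots> = exp_monomial l a b (partial_sums l v) (differences l u)"
    unfolding prod_lessThan_add exp_monomial_def prod.distrib [symmetric] using la
    by (intro prod.cong) (simp_all add: d_def nth_append mult_ac)
  finally show ?thesis by (simp add: D_def)
qed

lemma sum_bibr_pairs_dual: "(\<Sum>p\<in>bibr_pairs l N. f (bibr_dual l p)) = (\<Sum>p\<in>bibr_pairs l N. f p)"
  by (rule sum.reindex_bij_witness [where i = "bibr_dual l" and j = "bibr_dual l"])
     (simp_all add: bibr_dual_involution bibr_dual_in_bibr_pairs)

text \<open>Substituting \<open>X'\<close>, \<open>Y'\<close> in \<open>Tgen\<close> moves the weight of \<open>(u, v)\<close> to the dual pair.\<close>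

lemma Tsubst_exp_series:
  assumes es: "\<forall>e\<in>set es. 1 \<le> e" and la: "length a = length es" and lb: "length b = length es"
  shows "Tsubst es a b =
    exp_series (length es) (\<lambda>u v. \<Prod>j<length es. Lpow_weight (es!j) (differences (length es) u ! j)) a b"
proof (rule fps_ext)
  fix N
  define l where "l = length es"
  define Q where "Q = {(a',b'). length a' = l \<and> length b' = l \<and> sum_list a' + sum_list b' = sum_list a + sum_list b}"
  define G where "G v = (\<Prod>j<l. Lpow_weight (es!j) (v!j))" for v :: "nat list"
  define coeff where "coeff a' b' =
    Poly_Mapping.lookup (\<Prod>j<l. Xsub l j ^ (a'!j) * Ysub l j ^ (b'!j)) (pmono l a b)" for a' b'
  have "fps_nth (Tsubst es a b) N = (\<Sum>(a',b')\<in>Q. coeff a' b' * fps_nth (Tgen es a' b') N)"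
    by (simp add: Tsubst_def Let_def fps_sum_nth case_prod_beta Q_def coeff_def l_def)
  also have "\<dots> = (\<Sum>(a',b')\<in>Q. \<Sum>(u,v)\<in>bibr_pairs l N. G v * (coeff a' b' * exp_monomial l a' b' u v))"
    by (simp add: Tgen_exp_series [OF es] exp_series_def G_def l_def sum_distrib_left case_prod_beta mult_ac)
  also have "\<dots> = (\<Sum>(u,v)\<in>bibr_pairs l N. G v * (\<Sum>(a',b')\<in>Q. coeff a' b' * exp_monomial l a' b' u v))"
    unfolding case_prod_beta sum_distrib_left by (rule sum.swap)
  also have "\<dots> = (\<Sum>(u,v)\<in>bibr_pairs l N. G v * exp_monomial l a b (partial_sums l v) (differences l u))"
    using la lb unfolding Q_def coeff_def l_def
    by (intro sum.cong refl) (auto simp: bibr_pairs_def exp_monomial_substitution)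
  also have "\<dots> = (\<Sum>p\<in>bibr_pairs l N. (\<lambda>(U,V). G (differences l U) * exp_monomial l a b U V) (bibr_dual l p))"
    by (intro sum.cong refl) (auto simp: bibr_dual_def bibr_pairs_def differences_partial_sums)
  also have "\<dots> = (\<Sum>(U,V)\<in>bibr_pairs l N. G (differences l U) * exp_monomial l a b U V)"
    by (rule sum_bibr_pairs_dual)
  finally show "fps_nth (Tsubst es a b) N = fps_nth (exp_series (length es)
      (\<lambda>u v. \<Prod>j<length es. Lpow_weight (es!j) (differences (length es) u ! j)) a b) N"
    by (simp add: exp_series_def G_def l_def)
qed

lemma prod_Dstep_weight:
  assumes es: "\<forall>e\<in>set es. 1 \<le> e" and p: "(u,v) \<in> bibr_pairs (length es) N"
  shows "(\<Prod>j\<in>{1..<Suc (length es)}. \<Prod>k\<in>{1..<es!(j-1)}. Dstep_weight (length es) j k u)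
       = (\<Prod>j<length es. Lpow_weight (es!j) (differences (length es) u ! j))"
proof -
  let ?l = "length es"
  have lu: "length u = ?l" and su: "sorted_wrt (>) u" and up: "\<forall>x\<in>set u. 0 < x"
    using p by (auto simp: bibr_pairs_def)
  have "(\<Prod>k\<in>{1..<es!j}. Dstep_weight ?l (Suc j) k u) = Lpow_weight (es!j) (differences ?l u ! j)"
    if j: "j < ?l" for j
  proof -
    have "1 \<le> es!j" using es j by simp
    then obtain e where e: "es!j = Suc e" by (cases "es!j") auto
    have "Dstep_weight ?l (Suc j) k u = of_nat (differences ?l u ! j) / of_nat k - 1" for k
    proof -
      have "?l - Suc j + 1 = ?l - j" "?l - j < ?l \<longleftrightarrow> j \<noteq> 0" using j by auto
      then show ?thesis
        using j by (simp add: Dstep_weight_def of_nat_nth_differences [OF su lu] diff_commute)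
    qed
    moreover have "1 \<le> differences ?l u ! j" using differences_pos [OF su lu up j] by simp
    ultimately show ?thesis by (simp add: e Lpow_weight_eq_prod)
  qed
  then show ?thesis
    unfolding One_nat_def prod.shift_bounds_Suc_ivl atLeast0LessThan by (intro prod.cong) simp_all
qed

lemma exp_series_cong:
  "(\<And>N u v. (u,v) \<in> bibr_pairs l N \<Longrightarrow> g u v = h u v) \<Longrightarrow> exp_series l g a b = exp_series l h a b"
  unfolding exp_series_def by (intro fps_ext) (auto intro!: sum.cong)

lemma DY_Tbi_eq_Tsubst:
  assumes es: "\<forall>e\<in>set es. 1 \<le> e" and la: "length a = length es" and lb: "length b = length es"
  shows "DY es Tbi a b = Tsubst es a b"
proof -
  have "DY es Tbi a b = exp_series (length es)
      (\<lambda>u v. \<Prod>j\<in>{1..<Suc (length es)}. \<Prod>k\<in>{1..<es!(j-1)}. Dstep_weight (length es) j k u) a b"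
    using DY_Tbi_has_exp_weight [of es] la lb by (simp add: has_exp_weight_def)
  also have "\<dots> = Tsubst es a b"
    unfolding Tsubst_exp_series [OF es la lb] by (rule exp_series_cong) (rule prod_Dstep_weight [OF es])
  finally show ?thesis .
qed

section \<open>\<open>T(X;Y;e)\<close> in the span of bi-brackets\<close>

definition Lpow_weight_poly :: "nat \<Rightarrow> rat poly" where
  "Lpow_weight_poly e = (\<Prod>k\<in>{1..<e}. [:-1, 1 / of_nat k:])"

lemma Lpow_weight_eq_poly:
  assumes "1 \<le> e" "1 \<le> n"
  shows "Lpow_weight e n = poly (Lpow_weight_poly e) (of_nat n)"
proof -
  obtain e' where e': "e = Suc e'" using assms by (cases e) auto
  show ?thesis unfolding e' Lpow_weight_eq_prod [OF assms(2)] Lpow_weight_poly_def poly_prod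
    by (rule prod.cong) (simp_all add: field_simps)
qed

text \<open>A polynomial weight in \<open>v\<close> only shifts the \<open>X\<close>-degree, which keeps \<open>Tgen\<close> inside the span of
  the bi-brackets.\<close>

lemma Lpow_weight_mult_power_div_fact:
  assumes "1 \<le> e" "1 \<le> v"
  shows "Lpow_weight e v * (x * (of_nat v ^ a / fact a))
     = (\<Sum>t\<le>degree (Lpow_weight_poly e).
          (coeff (Lpow_weight_poly e) t * fact (a + t) / fact a) * (x * (of_nat v ^ (a + t) / fact (a + t))))"
proof -
  have "Lpow_weight e v * (x * (of_nat v ^ a / fact a))
      = (\<Sum>t\<le>degree (Lpow_weight_poly e). coeff (Lpow_weight_poly e) t * of_nat v ^ t) * (x * (of_nat v ^ a / fact a))"
    by (simp add: Lpow_weight_eq_poly [OF assms] poly_altdef)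
  also have "\<dots> = (\<Sum>t\<le>degree (Lpow_weight_poly e).
          (coeff (Lpow_weight_poly e) t * fact (a + t) / fact a) * (x * (of_nat v ^ (a + t) / fact (a + t))))"
    unfolding sum_distrib_right by (rule sum.cong [OF refl]) (simp add: power_add field_simps)
  finally show ?thesis .
qed

lemma Tgen_eq_sum_Tbi:
  fixes a b :: "nat list" and l :: nat
  assumes es: "\<forall>e\<in>set es. 1 \<le> e" and l: "length es = l"
  defines "\<kappa> j t \<equiv> coeff (Lpow_weight_poly (es!j)) t * fact (a!j + t) / fact (a!j)"
    and "T \<equiv> Pi\<^sub>E {..<l} (\<lambda>j. {..degree (Lpow_weight_poly (es!j))})"
  shows "Tgen es a b = (\<Sum>\<tau>\<in>T. fps_const (\<Prod>j<l. \<kappa> j (\<tau> j)) * Tbi (map (\<lambda>j. a!j + \<tau> j) [0..<l]) b)"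
proof (rule fps_ext)
  fix N
  let ?A = "\<lambda>\<tau>. map (\<lambda>j. a!j + \<tau> j) [0..<l]"
  have expand: "(\<Prod>j<l. Lpow_weight (es!j) (v!j)) * exp_monomial l a b u v
      = (\<Sum>\<tau>\<in>T. (\<Prod>j<l. \<kappa> j (\<tau> j)) * exp_monomial l (?A \<tau>) b u v)"
    if "(u,v) \<in> bibr_pairs l N" for u v
  proof -
    have vpos: "\<And>j. j < l \<Longrightarrow> 1 \<le> v!j"
      using that by (auto simp: bibr_pairs_def all_set_conv_all_nth Suc_le_eq)
    have epos: "\<And>j. j < l \<Longrightarrow> 1 \<le> es!j" using es l by auto
    define x where "x j = (of_nat (u!j) ^ (b!j) / fact (b!j) :: rat)" for j
    have "(\<Prod>j<l. Lpow_weight (es!j) (v!j)) * exp_monomial l a b u v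
        = (\<Prod>j<l. Lpow_weight (es!j) (v!j) * (x j * (of_nat (v!j) ^ (a!j) / fact (a!j))))"
      unfolding exp_monomial_def x_def prod.distrib [symmetric] by (simp only: mult.assoc)
    also have "\<dots> = (\<Prod>j<l. \<Sum>t\<in>{..degree (Lpow_weight_poly (es!j))}.
        \<kappa> j t * (x j * (of_nat (v!j) ^ (a!j + t) / fact (a!j + t))))"
      unfolding \<kappa>_def by (intro prod.cong refl Lpow_weight_mult_power_div_fact epos vpos) simp_all
    also have "\<dots> = (\<Sum>\<tau>\<in>T. \<Prod>j<l. \<kappa> j (\<tau> j) * (x j * (of_nat (v!j) ^ (a!j + \<tau> j) / fact (a!j + \<tau> j))))"
      unfolding T_def by (rule prod_sum_PiE) auto
    also have "\<dots> = (\<Sum>\<tau>\<in>T. (\<Prod>j<l. \<kappa> j (\<tau> j)) * exp_monomial l (?A \<tau>) b u v)"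
      unfolding exp_monomial_def prod.distrib [symmetric]
      by (intro sum.cong refl prod.cong) (simp add: x_def)
    finally show ?thesis .
  qed
  have "fps_nth (Tgen es a b) N
      = (\<Sum>(u,v)\<in>bibr_pairs l N. \<Sum>\<tau>\<in>T. (\<Prod>j<l. \<kappa> j (\<tau> j)) * exp_monomial l (?A \<tau>) b u v)"
    unfolding Tgen_exp_series [OF es] exp_series_def l fps_nth_Abs_fps
    by (intro sum.cong refl) (auto simp: expand)
  also have "\<dots> = (\<Sum>\<tau>\<in>T. \<Sum>(u,v)\<in>bibr_pairs l N. (\<Prod>j<l. \<kappa> j (\<tau> j)) * exp_monomial l (?A \<tau>) b u v)"
    unfolding case_prod_beta by (rule sum.swap)
  also have "\<dots> = fps_nth (\<Sum>\<tau>\<in>T. fps_const (\<Prod>j<l. \<kappa> j (\<tau> j)) * Tbi (?A \<tau>) b) N"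
    by (simp add: fps_sum_nth Tbi_exp_series exp_series_def sum_distrib_left case_prod_beta)
  finally show "fps_nth (Tgen es a b) N = fps_nth (\<Sum>\<tau>\<in>T. fps_const (\<Prod>j<l. \<kappa> j (\<tau> j)) * Tbi (?A \<tau>) b) N" .
qed

lemma BD_zero: "0 \<in> BD"
  using BD_smult [OF BD_one, of 0] by simp

lemma BD_sum: "(\<And>x. x \<in> A \<Longrightarrow> f x \<in> BD) \<Longrightarrow> sum f A \<in> BD"
  by (induction A rule: infinite_finite_induct) (auto intro: BD_zero BD_add)

lemma Tbi_in_BD: "length a = length b \<Longrightarrow> Tbi a b \<in> BD"
  unfolding Tbi_def by (rule BD_bibr) auto

lemma Tgen_in_BD:
  assumes "\<forall>e\<in>set es. 1 \<le> e" "length b = length es"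
  shows "Tgen es a b \<in> BD"
  unfolding Tgen_eq_sum_Tbi [OF assms(1) refl] using assms(2)
  by (intro BD_sum BD_smult Tbi_in_BD) simp

theorem proposition5p5:
  fixes es :: "nat list"
  assumes "\<forall>e\<in>set es. 1 \<le> e"
  shows "(\<forall>a b. length a = length es \<longrightarrow> length b = length es \<longrightarrow> Tgen es a b \<in> BD)
       \<and> (\<forall>a b. length a = length es \<longrightarrow> length b = length es \<longrightarrow> DY es Tbi a b = Tsubst es a b)"
  using Tgen_in_BD [OF assms] DY_Tbi_eq_Tsubst [OF assms] by blast

end
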